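(* Let $K$ be a field of characteristic $\neq 2$ containing a square root $i$ of $-1$, and let $A\in K\setminus\{0\}$. For every integer $n\ge1$, $$\mathcal C_A(n)=\#\{T:\ T \text{ is on the } (\alpha,0)\text{-Euclid tree for some integer }\alpha\ge1,\ \max T=n\}+2,$$ and consequently $\mathcal C_A(n)=C_0(n)+1$.
   Context: Solutions are triples $(x,y,z)\in K[t]^3$ with $x^2+y^2+z^2=Axyz$; $\deg 0=-\infty$; the height is $h(x,y,z)=\max\{\deg x,\deg y,\deg z\}$; a Markoff triple is a solution with $h>0$ and $\deg x\le\deg y\le\deg z$; its signature is $S(x,y,z)=(\deg x,\deg y,\deg z)$. $\mathcal C_A(n)$ is the number of distinct signatures $S(P)$ of Markoff triples $P$ with $h(P)=n$. For integers $\alpha\ge1$ (more generally $\alpha\ge 0$) and $\beta\ge0$, define on triples of integers $\Gamma_{\beta,1}(\tau_1,\tau_2,\tau_3)=(\tau_2,\tau_3,\tau_2+\tau_3+\beta)$ and $\Gamma_{\beta,2}(\tau_1,\tau_2,\tau_3)=(\tau_1,\tau_3,\tau_1+\tau_3+\beta)$. The $(\alpha,\beta)$-Euclid tree is the set of triples obtained from the root $(\alpha,\alpha,2\alpha+\beta)$ by finitely many (possibly zero) applications of $\Gamma_{\beta,1},\Gamma_{\beta,2}$; "$T$ is on the tree" means $T$ belongs to this set, and $\max T$ is the largest entry of $T$. Triples are counted as distinct elements. For $\beta\ge0$ and $n\ge1$, $C_\beta(n)=\#\{T: T\text{ is on the }(\alpha,\beta)\text{-Euclid tree for some integer }\alpha\ge1,\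 \max T=n\}+1$. *)

theory Defs
  imports "HOL-Computational_Algebra.Polynomial" "HOL-Library.Option_ord"
begin

text \<open>Degree with deg 0 = -infinity, modelled as None (the bottom of the option order).\<close>
definition pdeg :: "'a::zero poly \<Rightarrow> int option" where
  "pdeg p = (if p = 0 then None else Some (int (degree p)))"

definition markoff_sol :: "'a::comm_ring_1 \<Rightarrow> 'a poly \<Rightarrow> 'a poly \<Rightarrow> 'a poly \<Rightarrow> bool" where
  "markoff_sol A x y z \<longleftrightarrow> x^2 + y^2 + z^2 = [:A:] * x * y * z"

definition height :: "'a::zero poly \<Rightarrow> 'a poly \<Rightarrow> 'a poly \<Rightarrow> int option" where
  "height x y z = max (pdeg x) (max (pdeg y) (pdeg z))"

definition markoff_triple :: "'a::comm_ring_1 \<Rightarrow> 'a poly \<Rightarrow> 'a poly \<Rightarrow> 'a poly \<Rightarrow> bool" where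
  "markoff_triple A x y z \<longleftrightarrow> markoff_sol A x y z \<and> height x y z > Some 0
     \<and> pdeg x \<le> pdeg y \<and> pdeg y \<le> pdeg z"

definition signature :: "'a::zero poly \<Rightarrow> 'a poly \<Rightarrow> 'a poly \<Rightarrow> int option \<times> int option \<times> int option" where
  "signature x y z = (pdeg x, pdeg y, pdeg z)"

definition CA :: "'a::comm_ring_1 \<Rightarrow> int \<Rightarrow> nat" where
  "CA A n = card {signature x y z | x y z. markoff_triple A x y z \<and> height x y z = Some n}"

fun Gamma1 :: "int \<Rightarrow> int \<times> int \<times> int \<Rightarrow> int \<times> int \<times> int" where
  "Gamma1 \<beta> (t1, t2, t3) = (t2, t3, t2 + t3 + \<beta>)"

fun Gamma2 :: "int \<Rightarrow> int \<times> int \<times> int \<Rightarrow> int \<times> int \<times> int" where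
  "Gamma2 \<beta> (t1, t2, t3) = (t1, t3, t1 + t3 + \<beta>)"

inductive_set euclid_tree :: "int \<Rightarrow> int \<Rightarrow> (int \<times> int \<times> int) set" for \<alpha> \<beta> where
  root: "(\<alpha>, \<alpha>, 2*\<alpha> + \<beta>) \<in> euclid_tree \<alpha> \<beta>"
| g1: "T \<in> euclid_tree \<alpha> \<beta> \<Longrightarrow> Gamma1 \<beta> T \<in> euclid_tree \<alpha> \<beta>"
| g2: "T \<in> euclid_tree \<alpha> \<beta> \<Longrightarrow> Gamma2 \<beta> T \<in> euclid_tree \<alpha> \<beta>"

fun max3 :: "int \<times> int \<times> int \<Rightarrow> int" where
  "max3 (a, b, c) = max a (max b c)"

definition tree_count :: "int \<Rightarrow> int \<Rightarrow> nat" where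
  "tree_count \<beta> n = card {T. \<exists>\<alpha>::int. \<alpha> \<ge> 1 \<and> T \<in> euclid_tree \<alpha> \<beta> \<and> max3 T = n}"

definition C_beta :: "int \<Rightarrow> int \<Rightarrow> nat" where
  "C_beta \<beta> n = tree_count \<beta> n + 1"

end

theory Submission
  imports Defs
begin

text \<open>Comparing degrees in \<open>x\<^sup>2 + y\<^sup>2 + z\<^sup>2 = A x y z\<close> shows that a Markoff triple with
  \<open>1 \<le> deg x \<le> deg y \<le> deg z\<close> has \<open>deg z = deg x + deg y\<close> (for the lower bound, the Vieta
  partner \<open>A x y - z\<close> would otherwise have degree \<open>deg x + deg y\<close>, too large for
  \<open>z (A x y - z) = x\<^sup>2 + y\<^sup>2\<close>), while \<open>x = 0\<close> or \<open>deg x = 0\<close> forces \<open>deg y = deg z\<close>.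
  The triples \<open>(a, b, a + b)\<close> with \<open>1 \<le> a \<le> b\<close> are exactly those on the \<open>(\<alpha>, 0)\<close>-Euclid trees,
  and each is realised by a solution: the root by \<open>(t\<^sup>\<alpha>, i t\<^sup>\<alpha>, A i t\<^sup>2\<^sup>\<alpha>)\<close>, and the moves
  \<open>Gamma1\<close>, \<open>Gamma2\<close> by Vieta involutions.  Two further signatures \<open>(-\<infinity>, n, n)\<close> and
  \<open>(0, n, n)\<close> come from explicit solutions using \<open>i\<close>.\<close>

lemma pdeg_nonzero: "p \<noteq> 0 \<Longrightarrow> pdeg p = Some (int (degree p))"
  by (simp add: pdeg_def)

lemma pdeg_0 [simp]: "pdeg 0 = None"
  by (simp add: pdeg_def)

lemma markoff_sol_swap:
  "markoff_sol A x y z \<Longrightarrow> markoff_sol A y x z"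
  by (simp add: markoff_sol_def algebra_simps)

lemma markoff_sol_vieta:
  fixes x y z :: "'a::comm_ring_1 poly"
  assumes "markoff_sol A x y z"
  shows "markoff_sol A y z ([:A:] * y * z - x)"
proof -
  have "y^2 + z^2 + ([:A:] * y * z - x)^2 - [:A:] * y * z * ([:A:] * y * z - x)
      = x^2 + y^2 + z^2 - [:A:] * x * y * z"
    by (simp add: power2_eq_square algebra_simps)
  with assms show ?thesis by (simp add: markoff_sol_def)
qed

lemma markoff_degree_le_sum:
  fixes x y z :: "'a::field poly"
  assumes "markoff_sol A x y z" "A \<noteq> 0" "x \<noteq> 0" "y \<noteq> 0" "z \<noteq> 0"
  shows "degree z \<le> degree x + degree y"
proof (rule ccontr)
  assume big: "\<not> ?thesis"
  have "z^2 = [:A:] * x * y * z - x^2 - y^2"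
    using assms(1) by (simp add: markoff_sol_def algebra_simps)
  moreover have "degree ([:A:] * x * y * z) = degree x + degree y + degree z"
    using assms(2-) by (simp add: degree_mult_eq)
  ultimately have "degree (z^2) < 2 * degree z"
    using big degree_diff_le_max[of "[:A:] * x * y * z - x^2" "y^2"]
      degree_diff_le_max[of "[:A:] * x * y * z" "x^2"]
    by (simp add: degree_power_eq assms)
  then show False
    using assms(5) by (simp add: degree_power_eq)
qed

lemma degree_vieta_flip:
  fixes x y z :: "'a::field poly"
  assumes "A \<noteq> 0" "y \<noteq> 0" "z \<noteq> 0" "degree x < degree y + degree z"
  shows "degree ([:A:] * y * z - x) = degree y + degree z"
proof -
  have "degree ([:A:] * y * z) = degree y + degree z"
    using assms(1-3) by (simp add: degree_mult_eq)
  then show ?thesis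
    using assms(4) degree_add_eq_left[of "- x" "[:A:] * y * z"] by simp
qed

lemma markoff_degree_ge_sum:
  fixes x y z :: "'a::field poly"
  assumes "markoff_sol A x y z" "A \<noteq> 0" "x \<noteq> 0" "y \<noteq> 0" "z \<noteq> 0"
    and "1 \<le> degree x" "degree x \<le> degree y" "degree y \<le> degree z"
  shows "degree x + degree y \<le> degree z"
proof (rule ccontr)
  assume small: "\<not> ?thesis"
  define w where "w = [:A:] * x * y - z"
  have "degree w = degree x + degree y"
    unfolding w_def using assms(2-5) small by (intro degree_vieta_flip) auto
  then have "degree (z * w) = degree z + degree x + degree y"
    using assms(5,6) by (subst degree_mult_eq) auto
  moreover have "z * w = x^2 + y^2"
    using assms(1) by (simp add: markoff_sol_def w_def algebra_simps power2_eq_square)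
  moreover have "degree (x^2 + y^2) \<le> 2 * degree y"
    using degree_add_le_max[of "x^2" "y^2"] assms(7) by (simp add: degree_power_eq assms)
  ultimately show False
    using assms(6,8) by simp
qed

lemma euclid_tree_0_shape:
  assumes "T \<in> euclid_tree \<alpha> 0" "\<alpha> \<ge> 1"
  shows "\<exists>a b. T = (a, b, a + b) \<and> 1 \<le> a \<and> a \<le> b"
  using assms
proof (induction rule: euclid_tree.induct)
  case root
  then show ?case by (intro exI[of _ \<alpha>]) simp
next
  case (g1 T)
  then obtain a b where "T = (a, b, a + b)" "1 \<le> a" "a \<le> b" by blast
  then show ?case by (intro exI[of _ b] exI[of _ "a + b"]) simp
next
  case (g2 T)
  then obtain a b where "T = (a, b, a + b)" "1 \<le> a" "a \<le> b" by blast
  then show ?case by (intro exI[of _ a] exI[of _ "a + b"]) simp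
qed

text \<open>Running the Euclidean algorithm backwards: subtracting the smaller entry from the
  larger one undoes \<open>Gamma1\<close> or \<open>Gamma2\<close>, and the algorithm ends at a root \<open>(a, a, 2a)\<close>.\<close>
lemma euclid_tree_0_complete:
  "1 \<le> a \<Longrightarrow> a \<le> b \<Longrightarrow> \<exists>\<alpha>\<ge>1. (a, b, a + b) \<in> euclid_tree \<alpha> 0"
proof (induction "nat (a + b)" arbitrary: a b rule: less_induct)
  case less
  consider "a = b" | "a < b" "b - a \<le> a" | "a < b" "a < b - a"
    using less.prems by linarith
  then show ?case
  proof cases
    case 1
    then have "(a, b, a + b) = (a, a, 2 * a + 0)" by simp
    then show ?thesis
      using less.prems euclid_tree.root[of a 0] by metis
  next
    case 2
    moreover have "nat ((b - a) + a) < nat (a + b)" using less.prems by simp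
    ultimately obtain \<alpha> where "\<alpha> \<ge> 1" "(b - a, a, (b - a) + a) \<in> euclid_tree \<alpha> 0"
      using less.hyps[of "b - a" a] by auto
    moreover have "Gamma1 0 (b - a, a, (b - a) + a) = (a, b, a + b)" by simp
    ultimately show ?thesis using euclid_tree.g1 by metis
  next
    case 3
    moreover have "nat (a + (b - a)) < nat (a + b)" using less.prems by simp
    ultimately obtain \<alpha> where "\<alpha> \<ge> 1" "(a, b - a, a + (b - a)) \<in> euclid_tree \<alpha> 0"
      using less.hyps[of a "b - a"] less.prems by auto
    moreover have "Gamma2 0 (a, b - a, a + (b - a)) = (a, b, a + b)" by simp
    ultimately show ?thesis using euclid_tree.g2 by metis
  qed
qed

lemma on_euclid_tree_0_iff:
  "(\<exists>\<alpha>\<ge>1. T \<in> euclid_tree \<alpha> 0) \<longleftrightarrow> (\<exists>a b. T = (a, b, a + b) \<and> 1 \<le> a \<and> a \<le> b)"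
  using euclid_tree_0_shape euclid_tree_0_complete by blast

lemma power2_smult_sqrt_minus_one:
  fixes i :: "'a::comm_ring_1"
  assumes "i * i = -1"
  shows "(smult i p)^2 = - (p^2)"
  by (simp add: power2_eq_square assms)

lemma markoff_sol_root:
  fixes i :: "'a::comm_ring_1"
  assumes "i * i = -1"
  shows "markoff_sol A x (smult i x) ([:A:] * x * smult i x)"
  using power2_smult_sqrt_minus_one[OF assms, of x]
  by (simp add: markoff_sol_def power2_eq_square algebra_simps)

lemma markoff_realizes_euclid_tree_0:
  fixes A i :: "'a::field"
  assumes "T \<in> euclid_tree \<alpha> 0" "\<alpha> \<ge> 1" "A \<noteq> 0" "i * i = -1"
  shows "\<exists>x y z :: 'a poly. markoff_sol A x y z \<and> x \<noteq> 0 \<and> y \<noteq> 0 \<and> z \<noteq> 0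
     \<and> T = (int (degree x), int (degree y), int (degree z))"
  using assms(1)
proof (induction rule: euclid_tree.induct)
  case root
  define x :: "'a poly" where "x = monom 1 (nat \<alpha>)"
  have "i \<noteq> 0" using assms(4) by auto
  then have "x \<noteq> 0" "smult i x \<noteq> 0" "[:A:] * x * smult i x \<noteq> 0"
    and "degree x = nat \<alpha>" "degree (smult i x) = nat \<alpha>"
    and "degree ([:A:] * x * smult i x) = nat \<alpha> + nat \<alpha>"
    using assms(3) by (simp_all add: x_def degree_monom_eq degree_mult_eq)
  with markoff_sol_root[OF assms(4)] assms(2) show ?case by fastforce
next
  case (g1 T)
  then obtain x y z :: "'a poly" where sol: "markoff_sol A x y z" "x \<noteq> 0" "y \<noteq> 0" "z \<noteq> 0"
    and T: "T = (int (degree x), int (degree y), int (degree z))" by blast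
  from euclid_tree_0_shape[OF g1.hyps assms(2)] T
  have lt: "degree x < degree y + degree z" by auto
  let ?w = "[:A:] * y * z - x"
  have "degree ?w = degree y + degree z"
    using degree_vieta_flip[OF assms(3) sol(3,4) lt] .
  with lt have "?w \<noteq> 0" by auto
  with markoff_sol_vieta[OF sol(1)] sol \<open>degree ?w = _\<close> T show ?case
    by (intro exI[of _ y] exI[of _ z] exI[of _ ?w]) simp
next
  case (g2 T)
  then obtain x y z :: "'a poly" where sol: "markoff_sol A x y z" "x \<noteq> 0" "y \<noteq> 0" "z \<noteq> 0"
    and T: "T = (int (degree x), int (degree y), int (degree z))" by blast
  from euclid_tree_0_shape[OF g2.hyps assms(2)] T
  have lt: "degree y < degree x + degree z" by auto
  let ?w = "[:A:] * x * z - y"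
  have "degree ?w = degree x + degree z"
    using degree_vieta_flip[OF assms(3) sol(2,4) lt] .
  with lt have "?w \<noteq> 0" by auto
  with markoff_sol_vieta[OF markoff_sol_swap[OF sol(1)]] sol \<open>degree ?w = _\<close> T show ?case
    by (intro exI[of _ x] exI[of _ z] exI[of _ ?w]) simp
qed

text \<open>With \<open>x = c\<close> and \<open>A c = 2\<close> the equation becomes \<open>(y - z)\<^sup>2 = - c\<^sup>2\<close>.\<close>
lemma markoff_sol_first_const:
  fixes A i :: "'a::field"
  assumes "i * i = -1" "A \<noteq> 0"
  shows "markoff_sol A [:2 / A:] y (y - [:2 * i / A:])"
proof -
  define c where "c = 2 / A"
  have "[:A:] * [:c:] = 2"
    using assms(2) by (simp add: c_def numeral_poly)
  moreover have "[:i * c:] * [:i * c:] = - ([:c:] * [:c:])"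
  proof -
    have "i * c * (i * c) = (i * i) * (c * c)" by algebra
    with assms(1) show ?thesis by simp
  qed
  moreover have "[:c:]^2 + y^2 + (y - [:i * c:])^2
      = ([:c:] * [:c:] + [:i * c:] * [:i * c:]) + 2 * y * (y - [:i * c:])"
    by algebra
  ultimately show ?thesis
    by (simp add: markoff_sol_def c_def mult.commute[of i] mult.assoc[symmetric])
qed

lemma markoff_triple_of_degrees:
  fixes x y z :: "'a::comm_ring_1 poly"
  assumes "markoff_sol A x y z" "x \<noteq> 0" "y \<noteq> 0" "z \<noteq> 0"
    and "degree x \<le> degree y" "degree y \<le> degree z" "1 \<le> degree z"
  shows "markoff_triple A x y z \<and> height x y z = Some (int (degree z))
    \<and> signature x y z = (Some (int (degree x)), Some (int (degree y)), Some (int (degree z)))"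
  using assms
  by (simp add: markoff_triple_def height_def signature_def pdeg_nonzero max_def)

definition markoff_signatures :: "'a::comm_ring_1 \<Rightarrow> int \<Rightarrow> (int option \<times> int option \<times> int option) set"
  where "markoff_signatures A n =
    {signature x y z | x y z. markoff_triple A x y z \<and> height x y z = Some n}"

definition tree_triples :: "int \<Rightarrow> int \<Rightarrow> (int \<times> int \<times> int) set"
  where "tree_triples \<beta> n = {T. \<exists>\<alpha>\<ge>1. T \<in> euclid_tree \<alpha> \<beta> \<and> max3 T = n}"

lemma signature_in_markoff_signatures:
  "markoff_triple A x y z \<Longrightarrow> height x y z = Some n \<Longrightarrow> signature x y z \<in> markoff_signatures A n"
  unfolding markoff_signatures_def by blast

lemma tree_triples_0_eq:
  "tree_triples 0 n = {(a, b, a + b) | a b. 1 \<le> a \<and> a \<le> b \<and> a + b = n}"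
proof -
  have "T \<in> tree_triples 0 n \<longleftrightarrow> (\<exists>\<alpha>\<ge>1. T \<in> euclid_tree \<alpha> 0) \<and> max3 T = n" for T
    unfolding tree_triples_def by blast
  then show ?thesis
    unfolding on_euclid_tree_0_iff by auto
qed

lemma finite_tree_triples_0: "finite (tree_triples 0 n)"
proof (rule finite_subset)
  show "tree_triples 0 n \<subseteq> {1..n} \<times> {1..n} \<times> {n}"
    unfolding tree_triples_0_eq by auto
qed simp

lemma markoff_signature_cases:
  fixes A :: "'a::field"
  assumes "A \<noteq> 0" "markoff_triple A x y z" "height x y z = Some n"
  shows "signature x y z \<in> {(None, Some n, Some n), (Some 0, Some n, Some n)}
      \<union> map_prod Some (map_prod Some Some) ` tree_triples 0 n"
proof -
  have sol: "markoff_sol A x y z" and xy: "pdeg x \<le> pdeg y" and yz: "pdeg y \<le> pdeg z"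
    using assms(2) by (auto simp: markoff_triple_def)
  then have "pdeg z = Some n"
    using assms(3) order_trans[OF xy yz] by (simp add: height_def max_def)
  then have "z \<noteq> 0" and dz: "int (degree z) = n"
    by (auto simp: pdeg_def split: if_splits)
  show ?thesis
  proof (cases "x = 0")
    case True
    with sol have "y^2 = - (z^2)"
      by (simp add: markoff_sol_def eq_neg_iff_add_eq_0)
    with \<open>z \<noteq> 0\<close> have "y \<noteq> 0"
      by auto
    from \<open>y^2 = - (z^2)\<close> have "degree (y^2) = degree (z^2)"
      by (metis degree_minus)
    with \<open>y \<noteq> 0\<close> \<open>z \<noteq> 0\<close> have "degree y = degree z"
      by (simp add: degree_power_eq)
    with True dz \<open>y \<noteq> 0\<close> \<open>z \<noteq> 0\<close> show ?thesis
      by (simp add: signature_def pdeg_nonzero)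
  next
    case False
    with xy have "y \<noteq> 0"
      by (auto simp: pdeg_def split: if_splits)
    with False xy yz \<open>z \<noteq> 0\<close> have "degree x \<le> degree y" "degree y \<le> degree z"
      by (simp_all add: pdeg_nonzero)
    have le: "degree z \<le> degree x + degree y"
      using markoff_degree_le_sum[OF sol assms(1) False \<open>y \<noteq> 0\<close> \<open>z \<noteq> 0\<close>] .
    show ?thesis
    proof (cases "degree x = 0")
      case True
      with le \<open>degree y \<le> degree z\<close> False \<open>y \<noteq> 0\<close> \<open>z \<noteq> 0\<close> dz show ?thesis
        by (simp add: signature_def pdeg_nonzero)
    next
      case x_pos: False
      with markoff_degree_ge_sum[OF sol assms(1) False \<open>y \<noteq> 0\<close> \<open>z \<noteq> 0\<close>] le
        \<open>degree x \<le> degree y\<close> \<open>degree y \<le> degree z\<close>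
      have "degree z = degree x + degree y" by simp
      with x_pos \<open>degree x \<le> degree y\<close> dz
      have "(int (degree x), int (degree y), int (degree z)) \<in> tree_triples 0 n"
        unfolding tree_triples_0_eq by auto
      moreover have "signature x y z
          = map_prod Some (map_prod Some Some) (int (degree x), int (degree y), int (degree z))"
        using False \<open>y \<noteq> 0\<close> \<open>z \<noteq> 0\<close> by (simp add: signature_def pdeg_nonzero)
      ultimately show ?thesis
        by blast
    qed
  qed
qed

lemma markoff_signatures_0_eq:
  fixes A i :: "'a::field"
  assumes "(2::'a) \<noteq> 0" "i * i = -1" "A \<noteq> 0" "n \<ge> 1"
  shows "markoff_signatures A n = {(None, Some n, Some n), (Some 0, Some n, Some n)}
      \<union> map_prod Some (map_prod Some Some) ` tree_triples 0 n" (is "_ = ?rhs")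
proof
  show "markoff_signatures A n \<subseteq> ?rhs"
  proof
    fix s assume "s \<in> markoff_signatures A n"
    then obtain x y z :: "'a poly" where "markoff_triple A x y z" "height x y z = Some n"
      and "s = signature x y z"
      unfolding markoff_signatures_def by blast
    then show "s \<in> ?rhs"
      using markoff_signature_cases[OF assms(3)] by simp
  qed
next
  define y :: "'a poly" where "y = monom 1 (nat n)"
  have "i \<noteq> 0" using assms(2) by auto
  have y: "y \<noteq> 0" "int (degree y) = n"
    using assms(4) by (simp_all add: y_def degree_monom_eq)
  have "(None, Some n, Some n) \<in> markoff_signatures A n"
  proof -
    have "smult i y \<noteq> 0" "degree (smult i y) = degree y"
      using y \<open>i \<noteq> 0\<close> by simp_all
    moreover have "markoff_sol A 0 y (smult i y)"
      using power2_smult_sqrt_minus_one[OF assms(2), of y] by (simp add: markoff_sol_def)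
    ultimately have "markoff_triple A 0 y (smult i y)" "height 0 y (smult i y) = Some n"
      and "signature 0 y (smult i y) = (None, Some n, Some n)"
      using y assms(4) by (simp_all add: markoff_triple_def height_def signature_def pdeg_nonzero)
    then show ?thesis
      by (metis signature_in_markoff_signatures)
  qed
  moreover have "(Some 0, Some n, Some n) \<in> markoff_signatures A n"
  proof -
    let ?x = "[:2 / A:]" and ?z = "y - [:2 * i / A:]"
    have "degree ?z = degree y"
      unfolding diff_conv_add_uminus by (rule degree_add_eq_left) (use y assms(4) in simp)
    moreover from this have "?z \<noteq> 0"
      using y assms(4) by (metis degree_0 of_nat_0 not_one_le_zero)
    moreover have "?x \<noteq> 0"
      using assms(1,3) by simp
    ultimately have "markoff_triple A ?x y ?z \<and> height ?x y ?z = Some n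
        \<and> signature ?x y ?z = (Some 0, Some n, Some n)"
      using markoff_triple_of_degrees[OF markoff_sol_first_const[OF assms(2,3)], of y] y assms(4)
      by simp
    then show ?thesis
      by (metis signature_in_markoff_signatures)
  qed
  moreover have "map_prod Some (map_prod Some Some) ` tree_triples 0 n \<subseteq> markoff_signatures A n"
  proof
    fix s assume "s \<in> map_prod Some (map_prod Some Some) ` tree_triples 0 n"
    then obtain T where s: "s = map_prod Some (map_prod Some Some) T" and "T \<in> tree_triples 0 n"
      by (rule imageE)
    then obtain \<alpha> where T: "T \<in> euclid_tree \<alpha> 0" "\<alpha> \<ge> 1" "max3 T = n"
      unfolding tree_triples_def by blast
    obtain x y z :: "'a poly" where sol: "markoff_sol A x y z" "x \<noteq> 0" "y \<noteq> 0" "z \<noteq> 0"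
      and xyz: "T = (int (degree x), int (degree y), int (degree z))"
      using markoff_realizes_euclid_tree_0[OF T(1,2) assms(3,2)] by blast
    have "degree x \<le> degree y" "degree y \<le> degree z" "1 \<le> degree z" "int (degree z) = n"
      using euclid_tree_0_shape[OF T(1,2)] T(3) xyz by auto
    with markoff_triple_of_degrees[OF sol] have "markoff_triple A x y z"
      and "height x y z = Some n" and "signature x y z = s"
      using s xyz by simp_all
    then show "s \<in> markoff_signatures A n"
      by (metis signature_in_markoff_signatures)
  qed
  ultimately show "?rhs \<subseteq> markoff_signatures A n"
    by blast
qed

theorem lemma3p1:
  fixes A :: "'a::field" and n :: int
  assumes "(2::'a) \<noteq> 0"
    and "\<exists>i::'a. i * i = -1"
    and "A \<noteq> 0"
    and "n \<ge> 1"
  shows "CA A n = tree_count 0 n + 2 \<and> CA A n = C_beta 0 n + 1"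
proof -
  obtain i :: 'a where "i * i = -1" using assms(2) by blast
  let ?some3 = "map_prod Some (map_prod Some Some)"
  have "card (?some3 ` tree_triples 0 n) = card (tree_triples 0 n)"
    by (rule card_image) (auto simp: inj_on_def)
  moreover have "(None, Some n, Some n) \<notin> ?some3 ` tree_triples 0 n"
    and "(Some 0, Some n, Some n) \<notin> ?some3 ` tree_triples 0 n"
    by (auto simp: tree_triples_0_eq)
  ultimately have "card (markoff_signatures A n) = card (tree_triples 0 n) + 2"
    using markoff_signatures_0_eq[OF assms(1) \<open>i * i = -1\<close> assms(3,4)] finite_tree_triples_0
    by simp
  then show ?thesis
    by (simp add: CA_def tree_count_def C_beta_def markoff_signatures_def tree_triples_def)
qed

end
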